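(* Let $\boldsymbol{\Omega}_M=\boldsymbol{\Omega}^{(0)}\boldsymbol{\Omega}^{(0)\top}+\sum_{q=1}^Q\boldsymbol{\Omega}^{(q)}\boldsymbol{\Omega}^{(q)\top}$ and $\bar{\mathbf S}$ be as in the context. Then the $i$-th leading eigenvalue of $\boldsymbol{\Omega}_M$ satisfies $$\lambda_i(\boldsymbol{\Omega}_M)=\begin{cases}\|\boldsymbol\theta\|^2\|\boldsymbol\delta\|^2\,\lambda_i(\bar{\mathbf S}), & 1\le i\le K,\\ 0, & i>K.\end{cases}$$ Moreover, let $\bar{\mathbf S}=\mathbf J\boldsymbol\Sigma\mathbf J^\top$ be an eigenvalue decomposition of $\bar{\mathbf S}$ with $\mathbf J\in\mathbb R^{K\times K}$ orthogonal and $\boldsymbol\Sigma$ diagonal with entries in decreasing order. Then $\boldsymbol{\Omega}_M$ has the compact eigenvalue decomposition $\boldsymbol{\Omega}_M=\mathbf U\boldsymbol\Lambda\mathbf U^\top$ with $\boldsymbol\Lambda=\|\boldsymbol\theta\|^2\|\boldsymbol\delta\|^2\boldsymbol\Sigma$ and $\mathbf U\in\mathbb R^{n\times K}$ having orthonormal columns, whose $i$-th row is $$\mathbf U_{\bar i}=\frac{\theta_i}{\|\boldsymbol\theta^{(l_i)}\|}\,\mathbf J_{\bar{l_i}},\qquad 1\le i\le n,$$ where $\mathbf J_{\bar k}$ denotes the $k$-th row of $\mathbf J$. Finally, if $\|\boldsymbol\theta^{(k)}\|\asymp\|\boldsymbol\theta^{(k')}\|$ for all $k,k'\in\{1,\dots,K\}$,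 then $\|\mathbf U_{\bar i}\|\asymp\theta_i/\|\boldsymbol\theta\|$ uniformly in $i$.
   Context: Fix integers $K\ge2$, $K'\ge1$, $Q\ge1$. Primary nodes are $\{1,\dots,n\}$ with community labels $l_i\in\{1,\dots,K\}$, every community nonempty; bipartite nodes are $\{1,\dots,m\}$ with labels $r_j\in\{1,\dots,K'\}$ (the same labels for all $q$), every bipartite community nonempty. Parameters: $\boldsymbol\theta=(\theta_1,\dots,\theta_n)^\top\in(0,1]^n$, $\boldsymbol\delta=(\delta_1,\dots,\delta_m)^\top\in(0,1]^m$, a symmetric $\mathbf E\in[0,1]^{K\times K}$, and $\mathbf F^{(q)}\in[0,1]^{K\times K'}$ for $q=1,\dots,Q$. Define $\boldsymbol\Omega^{(0)}\in\mathbb R^{n\times n}$ by $\boldsymbol\Omega^{(0)}(i,j)=\theta_i\theta_j\mathbf E(l_i,l_j)$ and $\boldsymbol\Omega^{(q)}\in\mathbb R^{n\times m}$ by $\boldsymbol\Omega^{(q)}(i,j)=\theta_i\delta_j\mathbf F^{(q)}(l_i,r_j)$. Let $\boldsymbol\theta^{(k)}\in\mathbb R^n$ with $\theta^{(k)}_i=\theta_i\mathbb I(l_i=k)$, $\boldsymbol\delta^{(k')}\in\mathbb R^m$ with $\delta^{(k')}_j=\delta_j\mathbb I(r_j=k')$; $\boldsymbol\Psi_\theta=\mathrm{diag}(\|\boldsymbol\theta^{(k)}\|/\|\boldsymbol\theta\|)_{k=1}^K$, $\boldsymbol\Psi_\delta=\mathrm{diag}(\|\boldsymbol\delta^{(k')}\|/\|\boldsymbol\delta\|)_{k'=1}^{K'}$;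 $\mathbf S^{(0)}=\boldsymbol\Psi_\theta\mathbf E\boldsymbol\Psi_\theta$, $\mathbf S^{(q)}=\boldsymbol\Psi_\theta\mathbf F^{(q)}\boldsymbol\Psi_\delta$, and $\bar{\mathbf S}=(\|\boldsymbol\theta\|^2/\|\boldsymbol\delta\|^2)\mathbf S^{(0)}\mathbf S^{(0)\top}+\sum_{q=1}^Q\mathbf S^{(q)}\mathbf S^{(q)\top}$. Norms $\|\cdot\|$ are Euclidean. Eigenvalues of the positive semidefinite matrices $\boldsymbol\Omega_M$, $\bar{\mathbf S}$ are ordered decreasingly. For the last assertion, all quantities other than $K,K',Q$ may depend on $n$, and $a_n\asymp b_n$ means $b_n/C\le a_n\le Cb_n$ for a constant $C$ independent of $n$ and all large $n$. *)

theory Defs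
  imports "Jordan_Normal_Form.Matrix" "Jordan_Normal_Form.Char_Poly"
          "HOL-Computational_Algebra.Polynomial" "HOL-Library.Multiset"
begin

text \<open>Conventions: all indices are 0-based. Primary nodes are 0..n-1, bipartite nodes
  0..m-1, primary communities 0..K-1, bipartite communities 0..K'-1; the layers
  q range over 1..Q as in the paper. Vectors are functions nat to real restricted
  to an explicit length.\<close>

definition vnorm :: "nat \<Rightarrow> (nat \<Rightarrow> real) \<Rightarrow> real" where
  "vnorm d x = sqrt (\<Sum>i<d. (x i)\<^sup>2)"

definition restr :: "(nat \<Rightarrow> nat) \<Rightarrow> (nat \<Rightarrow> real) \<Rightarrow> nat \<Rightarrow> nat \<Rightarrow> real" where
  "restr lab x k = (\<lambda>i. if lab i = k then x i else 0)"

definition mat_sum :: "nat \<Rightarrow> nat \<Rightarrow> (nat \<Rightarrow> real mat) \<Rightarrow> nat set \<Rightarrow> real mat" where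
  "mat_sum d1 d2 A I = mat d1 d2 (\<lambda>(i,j). \<Sum>q\<in>I. A q $$ (i,j))"

definition model_ok ::
  "nat \<Rightarrow> nat \<Rightarrow> nat \<Rightarrow> nat \<Rightarrow> nat \<Rightarrow> (nat \<Rightarrow> nat) \<Rightarrow> (nat \<Rightarrow> nat)
   \<Rightarrow> (nat \<Rightarrow> real) \<Rightarrow> (nat \<Rightarrow> real) \<Rightarrow> real mat \<Rightarrow> (nat \<Rightarrow> real mat) \<Rightarrow> bool" where
  "model_ok K K' Q n m l r \<theta> \<delta> E F \<longleftrightarrow>
     (\<forall>i<n. l i < K) \<and> (\<forall>k<K. \<exists>i<n. l i = k) \<and>
     (\<forall>j<m. r j < K') \<and> (\<forall>k<K'. \<exists>j<m. r j = k) \<and>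
     (\<forall>i<n. 0 < \<theta> i \<and> \<theta> i \<le> 1) \<and> (\<forall>j<m. 0 < \<delta> j \<and> \<delta> j \<le> 1) \<and>
     E \<in> carrier_mat K K \<and> transpose_mat E = E \<and>
     (\<forall>a<K. \<forall>b<K. 0 \<le> E $$ (a,b) \<and> E $$ (a,b) \<le> 1) \<and>
     (\<forall>q\<in>{1..Q}. F q \<in> carrier_mat K K' \<and>
        (\<forall>a<K. \<forall>b<K'. 0 \<le> F q $$ (a,b) \<and> F q $$ (a,b) \<le> 1))"

definition Omega0 :: "nat \<Rightarrow> (nat \<Rightarrow> nat) \<Rightarrow> (nat \<Rightarrow> real) \<Rightarrow> real mat \<Rightarrow> real mat" where
  "Omega0 n l \<theta> E = mat n n (\<lambda>(i,j). \<theta> i * \<theta> j * E $$ (l i, l j))"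

definition OmegaQ :: "nat \<Rightarrow> nat \<Rightarrow> (nat \<Rightarrow> nat) \<Rightarrow> (nat \<Rightarrow> nat) \<Rightarrow> (nat \<Rightarrow> real)
   \<Rightarrow> (nat \<Rightarrow> real) \<Rightarrow> real mat \<Rightarrow> real mat" where
  "OmegaQ n m l r \<theta> \<delta> Fq = mat n m (\<lambda>(i,j). \<theta> i * \<delta> j * Fq $$ (l i, r j))"

definition Omega_M :: "nat \<Rightarrow> nat \<Rightarrow> nat \<Rightarrow> (nat \<Rightarrow> nat) \<Rightarrow> (nat \<Rightarrow> nat)
   \<Rightarrow> (nat \<Rightarrow> real) \<Rightarrow> (nat \<Rightarrow> real) \<Rightarrow> real mat \<Rightarrow> (nat \<Rightarrow> real mat) \<Rightarrow> real mat" where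
  "Omega_M Q n m l r \<theta> \<delta> E F =
     Omega0 n l \<theta> E * transpose_mat (Omega0 n l \<theta> E) +
     mat_sum n n (\<lambda>q. OmegaQ n m l r \<theta> \<delta> (F q) * transpose_mat (OmegaQ n m l r \<theta> \<delta> (F q))) {1..Q}"

definition Psi :: "nat \<Rightarrow> nat \<Rightarrow> (nat \<Rightarrow> nat) \<Rightarrow> (nat \<Rightarrow> real) \<Rightarrow> real mat" where
  "Psi K n l \<theta> = mat K K (\<lambda>(a,b). if a = b then vnorm n (restr l \<theta> a) / vnorm n \<theta> else 0)"

definition Sbar :: "nat \<Rightarrow> nat \<Rightarrow> nat \<Rightarrow> nat \<Rightarrow> nat \<Rightarrow> (nat \<Rightarrow> nat) \<Rightarrow> (nat \<Rightarrow> nat)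
   \<Rightarrow> (nat \<Rightarrow> real) \<Rightarrow> (nat \<Rightarrow> real) \<Rightarrow> real mat \<Rightarrow> (nat \<Rightarrow> real mat) \<Rightarrow> real mat" where
  "Sbar K K' Q n m l r \<theta> \<delta> E F =
     (let S0 = Psi K n l \<theta> * E * Psi K n l \<theta>;
          S = (\<lambda>q. Psi K n l \<theta> * F q * Psi K' m r \<delta>)
      in ((vnorm n \<theta>)\<^sup>2 / (vnorm m \<delta>)\<^sup>2) \<cdot>\<^sub>m (S0 * transpose_mat S0) +
         mat_sum K K (\<lambda>q. S q * transpose_mat (S q)) {1..Q})"

text \<open>Eigenvalues (with algebraic multiplicity, i.e. roots of the characteristic
  polynomial) in decreasing order; eig i A is the i-th one, for 1 \<le> i.\<close>
definition eigs_desc :: "real mat \<Rightarrow> real list" where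
  "eigs_desc A = rev (sorted_list_of_multiset (proots (char_poly A)))"

definition eig :: "nat \<Rightarrow> real mat \<Rightarrow> real" where
  "eig i A = eigs_desc A ! (i - 1)"

definition eig_decomp :: "nat \<Rightarrow> real mat \<Rightarrow> real mat \<Rightarrow> real mat \<Rightarrow> bool" where
  "eig_decomp K S J \<Sigma> \<longleftrightarrow>
     J \<in> carrier_mat K K \<and> transpose_mat J * J = 1\<^sub>m K \<and> J * transpose_mat J = 1\<^sub>m K \<and>
     \<Sigma> \<in> carrier_mat K K \<and> diagonal_mat \<Sigma> \<and>
     (\<forall>a b. a \<le> b \<and> b < K \<longrightarrow> \<Sigma> $$ (b,b) \<le> \<Sigma> $$ (a,a)) \<and>
     S = J * \<Sigma> * transpose_mat J"

definition Umat :: "nat \<Rightarrow> nat \<Rightarrow> (nat \<Rightarrow> nat) \<Rightarrow> (nat \<Rightarrow> real) \<Rightarrow> real mat \<Rightarrow> real mat" where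
  "Umat K n l \<theta> J = mat n K (\<lambda>(i,a). \<theta> i / vnorm n (restr l \<theta> (l i)) * J $$ (l i, a))"

end

theory Submission
  imports Defs
begin

text \<open>
  Let B be the n x K matrix whose k-th column is theta^(k) / ||theta^(k)||, and B' its analogue
  for delta. Entrywise one checks Omega^(q) = ||theta|| ||delta|| B S^(q) B'^T and
  Omega^(0) = ||theta||^2 B S^(0) B^T; as B and B' have orthonormal columns, this gives
  Omega_M = ||theta||^2 ||delta||^2 B Sbar B^T. Sylvester's determinant identity
  det (x I - A B) x^k = x^n det (x I - B A) turns this into
  char Omega_M = X^(n-K) char (||theta||^2 ||delta||^2 Sbar). Being a sum of Gram matrices,
  Sbar is symmetric positive semidefinite, so its eigenvalues are real and nonnegative and
  come before the n - K zeros. If Sbar = J Sigma J^T, then U = B J has orthonormal columns,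
  Omega_M = U (||theta||^2 ||delta||^2 Sigma) U^T, and the i-th row of U is
  theta_i / ||theta^(l_i)|| times a unit row of J. Finally ||theta^(l_i)|| <= ||theta||, and
  ||theta|| <= sqrt K C ||theta^(l_i)|| when the community norms are within a factor C.
\<close>

section \<open>Characteristic polynomials\<close>

lemma poly_char_poly_eq_det:
  fixes A :: "'a :: field mat"
  assumes A: "A \<in> carrier_mat n n"
  shows "poly (char_poly A) x = det (x \<cdot>\<^sub>m 1\<^sub>m n - A)"
proof -
  have "- char_matrix A x = x \<cdot>\<^sub>m 1\<^sub>m n - A"
    using A by (intro eq_matI) (auto simp: char_matrix_def)
  thus ?thesis using char_poly_matrix[OF A] by simp
qed

lemma det_four_block_schur_lower_right:
  fixes A B :: "'a :: field mat"
  assumes A: "A \<in> carrier_mat n k" and B: "B \<in> carrier_mat k n"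
  shows "det (four_block_mat (x \<cdot>\<^sub>m 1\<^sub>m n) A B (1\<^sub>m k)) = det (x \<cdot>\<^sub>m 1\<^sub>m n - A * B)"
proof -
  define L where "L = four_block_mat (1\<^sub>m n) A (0\<^sub>m k n) (1\<^sub>m k)"
  define R where "R = four_block_mat (x \<cdot>\<^sub>m 1\<^sub>m n - A * B) (0\<^sub>m n k) B (1\<^sub>m k)"
  have AB: "A * B \<in> carrier_mat n n" using A B by auto
  have "four_block_mat (x \<cdot>\<^sub>m 1\<^sub>m n) A B (1\<^sub>m k) = L * R"
    unfolding L_def R_def using A B AB
    by (subst mult_four_block_mat[of _ n n _ k _ k _ _ n _ k]) auto
  moreover have "L \<in> carrier_mat (n+k) (n+k)" "R \<in> carrier_mat (n+k) (n+k)"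
    unfolding L_def R_def using A B AB by auto
  moreover have "det L = 1"
    unfolding L_def using det_four_block_mat_lower_left_zero[OF one_carrier_mat A refl one_carrier_mat]
    by simp
  moreover have "det R = det (x \<cdot>\<^sub>m 1\<^sub>m n - A * B)"
    unfolding R_def
    using det_four_block_mat_upper_right_zero[OF minus_carrier_mat[OF AB] refl B one_carrier_mat]
    by simp
  ultimately show ?thesis by (simp add: det_mult)
qed

lemma det_four_block_schur_upper_left:
  fixes A B :: "'a :: field mat"
  assumes A: "A \<in> carrier_mat n k" and B: "B \<in> carrier_mat k n" and x: "x \<noteq> 0"
  shows "det (four_block_mat (x \<cdot>\<^sub>m 1\<^sub>m n) A B (1\<^sub>m k)) = x ^ n * det (1\<^sub>m k - (1/x) \<cdot>\<^sub>m (B * A))"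
proof -
  define L where "L = four_block_mat (x \<cdot>\<^sub>m 1\<^sub>m n) (0\<^sub>m n k) B (1\<^sub>m k)"
  define R where "R = four_block_mat (1\<^sub>m n) ((1/x) \<cdot>\<^sub>m A) (0\<^sub>m k n) (1\<^sub>m k - (1/x) \<cdot>\<^sub>m (B * A))"
  have BA: "B * A \<in> carrier_mat k k" using A B by auto
  have "x \<cdot>\<^sub>m 1\<^sub>m n * ((1/x) \<cdot>\<^sub>m A) = A"
    using A x by (intro eq_matI) auto
  moreover have "B * ((1/x) \<cdot>\<^sub>m A) + (1\<^sub>m k - (1/x) \<cdot>\<^sub>m (B * A)) = 1\<^sub>m k"
    using A B by (intro eq_matI) (auto simp: mult_smult_distrib)
  ultimately have "four_block_mat (x \<cdot>\<^sub>m 1\<^sub>m n) A B (1\<^sub>m k) = L * R"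
    unfolding L_def R_def using A B BA
    by (subst mult_four_block_mat[of _ n n _ k _ k _ _ n _ k]) auto
  moreover have "L \<in> carrier_mat (n+k) (n+k)" "R \<in> carrier_mat (n+k) (n+k)"
    unfolding L_def R_def using A B BA by auto
  moreover have "det L = x ^ n"
    unfolding L_def
    using det_four_block_mat_upper_right_zero[OF smult_carrier_mat[OF one_carrier_mat] refl B one_carrier_mat]
    by simp
  moreover have "det R = det (1\<^sub>m k - (1/x) \<cdot>\<^sub>m (B * A))"
    unfolding R_def using det_four_block_mat_lower_left_zero[OF one_carrier_mat smult_carrier_mat[OF A] refl
        minus_carrier_mat[OF smult_carrier_mat[OF BA]]]
    by simp
  ultimately show ?thesis by (simp add: det_mult)
qed

lemma det_sylvester:
  fixes A B :: "'a :: field mat"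
  assumes A: "A \<in> carrier_mat n k" and B: "B \<in> carrier_mat k n" and x: "x \<noteq> 0"
  shows "x ^ k * det (x \<cdot>\<^sub>m 1\<^sub>m n - A * B) = x ^ n * det (x \<cdot>\<^sub>m 1\<^sub>m k - B * A)"
proof -
  have "x \<cdot>\<^sub>m 1\<^sub>m k - B * A = x \<cdot>\<^sub>m (1\<^sub>m k - (1/x) \<cdot>\<^sub>m (B * A))"
    using A B x by (intro eq_matI) (auto simp: right_diff_distrib)
  thus ?thesis
    using det_four_block_schur_lower_right[OF A B, of x] det_four_block_schur_upper_left[OF A B x] A
    by (simp add: mult.left_commute)
qed

lemma poly_eqI_nonzero:
  fixes p q :: "'a :: {idom, ring_char_0} poly"
  assumes "\<And>x. x \<noteq> 0 \<Longrightarrow> poly p x = poly q x"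
  shows "p = q"
proof (rule ccontr)
  assume "p \<noteq> q"
  hence "finite {x. poly (p - q) x = 0}" by (intro poly_roots_finite) simp
  moreover have "UNIV - {0} \<subseteq> {x. poly (p - q) x = 0}" using assms by auto
  ultimately have "finite (UNIV - {0 :: 'a})" by (rule finite_subset[rotated])
  thus False by (simp add: infinite_UNIV_char_0)
qed

lemma char_poly_mult_commute:
  fixes A B :: "'a :: {field, ring_char_0} mat"
  assumes A: "A \<in> carrier_mat n k" and B: "B \<in> carrier_mat k n"
  shows "monom 1 k * char_poly (A * B) = monom 1 n * char_poly (B * A)"
  by (rule poly_eqI_nonzero)
    (use A B in \<open>simp add: poly_monom poly_char_poly_eq_det[of _ n] poly_char_poly_eq_det[of _ k]
      det_sylvester\<close>)

lemma char_poly_isometry_conj: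
  fixes B S :: "'a :: {field, ring_char_0} mat"
  assumes B: "B \<in> carrier_mat n k" and isometry: "transpose_mat B * B = 1\<^sub>m k"
    and S: "S \<in> carrier_mat k k" and "k \<le> n"
  shows "char_poly (B * S * transpose_mat B) = monom 1 (n - k) * char_poly S"
proof -
  have "monom 1 k * char_poly (B * (S * transpose_mat B)) = monom 1 n * char_poly (S * transpose_mat B * B)"
    using B S by (intro char_poly_mult_commute) auto
  also have "S * transpose_mat B * B = S"
    using B S isometry by simp
  also have "monom 1 n = monom 1 k * monom (1 :: 'a) (n - k)"
    using \<open>k \<le> n\<close> by (simp add: mult_monom)
  finally show ?thesis
    using B S by (simp add: mult.assoc monom_eq_0_iff)
qed

lemma char_poly_smult_linear_factors:
  fixes S :: "'a :: {field, ring_char_0} mat"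
  assumes S: "S \<in> carrier_mat k k" and cS: "char_poly S = (\<Prod>a\<leftarrow>as. [:- a, 1:])"
    and len: "length as = k" and c: "c \<noteq> 0"
  shows "char_poly (c \<cdot>\<^sub>m S) = (\<Prod>a\<leftarrow>map ((*) c) as. [:- a, 1:])"
proof (rule poly_eq_poly_eq_iff[THEN iffD1], rule ext)
  fix x
  have "x \<cdot>\<^sub>m 1\<^sub>m k - c \<cdot>\<^sub>m S = c \<cdot>\<^sub>m ((x / c) \<cdot>\<^sub>m 1\<^sub>m k - S)"
    using S c by (intro eq_matI) (auto simp: right_diff_distrib)
  hence "poly (char_poly (c \<cdot>\<^sub>m S)) x = c ^ k * poly (char_poly S) (x / c)"
    using S by (simp add: poly_char_poly_eq_det[of _ k])
  also have "\<dots> = (\<Prod>a\<leftarrow>as. c * (x / c - a))"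
    unfolding cS poly_prod_list len[symmetric] by (induction as) simp_all
  finally show "poly (char_poly (c \<cdot>\<^sub>m S)) x = poly (\<Prod>a\<leftarrow>map ((*) c) as. [:- a, 1:]) x"
    using c by (simp add: poly_prod_list o_def right_diff_distrib)
qed

lemma proots_linear_factors: "proots (\<Prod>a\<leftarrow>as. [:- a, 1:]) = mset (as :: 'a :: idom list)"
proof (induction as)
  case (Cons a as)
  have "[:- a, 1:] \<noteq> 0" "(\<Prod>a\<leftarrow>as. [:- a, 1:]) \<noteq> 0"
    by (auto simp: prod_list_zero_iff)
  then have "proots ([:- a, 1:] * (\<Prod>x\<leftarrow>as. [:- x, 1:])) = add_mset a (mset as)"
    by (simp add: proots_mult Cons.IH del: mult_pCons_left)
  then show ?case by simp
qed simp

lemma eigs_desc_linear_factors: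
  "char_poly A = (\<Prod>a\<leftarrow>as. [:- a, 1:]) \<Longrightarrow> eigs_desc A = rev (sort as)"
  by (simp add: eigs_desc_def proots_linear_factors)

section \<open>Spectra of symmetric positive semidefinite matrices\<close>

lemma real_sym_eigenvalue_real:
  fixes S :: "real mat"
  assumes S: "S \<in> carrier_mat k k" and sym: "transpose_mat S = S"
    and "eigenvalue (map_mat complex_of_real S) z"
  shows "z \<in> \<real>"
proof -
  let ?A = "map_mat complex_of_real S"
  obtain v where v: "v \<in> carrier_vec k" "v \<noteq> 0\<^sub>v k" and Av: "?A *\<^sub>v v = z \<cdot>\<^sub>v v"
    using assms(3) S unfolding eigenvalue_def eigenvector_def by auto
  have A: "?A \<in> carrier_mat k k" and symA: "transpose_mat ?A = ?A"
    using S sym map_mat_transpose[of _ S] by auto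
  have "?A *\<^sub>v conjugate v = conjugate (?A *\<^sub>v v)"
    using S v by (intro eq_vecI) (auto simp: scalar_prod_def sum_conjugate)
  hence "v \<bullet> (?A *\<^sub>v conjugate v) = cnj z * (v \<bullet>c v)"
    using v Av by (simp add: conjugate_smult_vec)
  moreover have "(?A *\<^sub>v v) \<bullet>c v = v \<bullet> (?A *\<^sub>v conjugate v)"
    using transpose_vec_mult_scalar[OF A carrier_vec_conjugate[OF v(1)] v(1)] symA by simp
  moreover have "(?A *\<^sub>v v) \<bullet>c v = z * (v \<bullet>c v)"
    using v Av by simp
  moreover have "v \<bullet>c v \<noteq> 0"
    using v by simp
  ultimately have "cnj z = z" by simp
  thus ?thesis by (simp add: Reals_cnj_iff)
qed

lemma real_sym_char_poly_splits:
  fixes S :: "real mat"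
  assumes S: "S \<in> carrier_mat k k" and sym: "transpose_mat S = S"
  obtains as where "length as = k" "char_poly S = (\<Prod>a\<leftarrow>as. [:- a, 1:])"
proof -
  interpret of_real_poly: map_poly_inj_comm_ring_hom complex_of_real ..
  let ?A = "map_mat complex_of_real S"
  obtain cs where cs: "char_poly ?A = (\<Prod>c\<leftarrow>cs. [:- c, 1:])" "length cs = k"
    using char_poly_factorized[of ?A k] S by auto
  have "c \<in> \<real>" if "c \<in> set cs" for c
  proof -
    have "poly (char_poly ?A) c = 0"
      using that unfolding cs(1) poly_prod_list by (induction cs) auto
    thus ?thesis using real_sym_eigenvalue_real[OF S sym] eigenvalue_root_char_poly[of ?A k] S by auto
  qed
  hence "map_poly complex_of_real (\<Prod>a\<leftarrow>map Re cs. [:- a, 1:]) = (\<Prod>c\<leftarrow>cs. [:- c, 1:])"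
    by (induction cs) (auto simp: of_real_poly.hom_mult map_poly_pCons simp del: mult_pCons_left)
  also have "\<dots> = map_poly complex_of_real (char_poly S)"
    unfolding cs(1)[symmetric] by (rule of_real_hom.char_poly_hom[OF S])
  finally have "char_poly S = (\<Prod>a\<leftarrow>map Re cs. [:- a, 1:])"
    by simp
  with cs(2) show ?thesis using that[of "map Re cs"] by simp
qed

lemma length_eigs_desc_real_sym:
  fixes S :: "real mat"
  assumes "S \<in> carrier_mat k k" "transpose_mat S = S"
  shows "length (eigs_desc S) = k"
  using real_sym_char_poly_splits[OF assms] by (metis eigs_desc_linear_factors length_rev length_sort)

definition psd_mat :: "real mat \<Rightarrow> bool" where
  "psd_mat A \<longleftrightarrow> (\<forall>v\<in>carrier_vec (dim_col A). 0 \<le> v \<bullet> (A *\<^sub>v v))"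

lemma psd_eigenvalue_nonneg:
  fixes S :: "real mat"
  assumes S: "S \<in> carrier_mat k k" and psd: "psd_mat S"
    and "eigenvalue S a"
  shows "0 \<le> a"
proof -
  obtain v where v: "v \<in> carrier_vec k" "v \<noteq> 0\<^sub>v k" and Sv: "S *\<^sub>v v = a \<cdot>\<^sub>v v"
    using assms(3) S unfolding eigenvalue_def eigenvector_def by auto
  have "0 < v \<bullet> v" using conjugate_square_greater_0_vec[OF v(1)] v(2) by simp
  moreover have "v \<bullet> (S *\<^sub>v v) = a * (v \<bullet> v)" using v Sv by simp
  moreover have "0 \<le> v \<bullet> (S *\<^sub>v v)" using psd S v(1) by (auto simp: psd_mat_def)
  ultimately show ?thesis by (simp add: zero_le_mult_iff)
qed

lemma sort_replicate_zero_append_scaled: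
  fixes as :: "'a :: linordered_idom list"
  assumes "0 \<le> c" "\<forall>a\<in>set as. 0 \<le> a"
  shows "sort (replicate d 0 @ map ((*) c) as) = replicate d 0 @ map ((*) c) (sort as)"
proof (rule properties_for_sort)
  have "sorted (map ((*) c) (sort as))"
    unfolding sorted_map
    by (rule sorted_wrt_mono_rel[OF _ sorted_sort]) (use \<open>0 \<le> c\<close> in \<open>simp add: mult_left_mono\<close>)
  thus "sorted (replicate d 0 @ map ((*) c) (sort as))"
    using assms by (auto simp: sorted_append)
qed simp

lemma eigs_desc_isometry_conj:
  fixes B S :: "real mat"
  assumes B: "B \<in> carrier_mat n k" and isometry: "transpose_mat B * B = 1\<^sub>m k"
    and S: "S \<in> carrier_mat k k" and sym: "transpose_mat S = S"
    and psd: "psd_mat S"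
    and c: "0 < c" and kn: "k \<le> n"
  shows "eigs_desc (B * (c \<cdot>\<^sub>m S) * transpose_mat B) = map ((*) c) (eigs_desc S) @ replicate (n - k) 0"
proof -
  obtain as where len: "length as = k" and cS: "char_poly S = (\<Prod>a\<leftarrow>as. [:- a, 1:])"
    using real_sym_char_poly_splits[OF S sym] .
  have nonneg: "\<forall>a\<in>set as. 0 \<le> a"
  proof
    fix a assume "a \<in> set as"
    hence "poly (char_poly S) a = 0" unfolding cS poly_prod_list by (induction as) auto
    thus "0 \<le> a" using psd_eigenvalue_nonneg[OF S psd] eigenvalue_root_char_poly[OF S] by blast
  qed
  have "char_poly (B * (c \<cdot>\<^sub>m S) * transpose_mat B) = monom 1 (n - k) * char_poly (c \<cdot>\<^sub>m S)"
    using S by (intro char_poly_isometry_conj[OF B isometry _ kn]) simp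
  also have "\<dots> = (\<Prod>a\<leftarrow>replicate (n - k) 0 @ map ((*) c) as. [:- a, 1:])"
    using char_poly_smult_linear_factors[OF S cS len] c by (simp add: monom_altdef prod_list_replicate)
  finally have "eigs_desc (B * (c \<cdot>\<^sub>m S) * transpose_mat B)
      = rev (sort (replicate (n - k) 0 @ map ((*) c) as))"
    by (rule eigs_desc_linear_factors)
  thus ?thesis
    using nonneg c
    by (simp add: eigs_desc_linear_factors[OF cS] sort_replicate_zero_append_scaled rev_map)
qed




section \<open>Gram matrices and sums of matrices\<close>

lemma assoc_mult_mat_dims:
  "dim_col A = dim_row B \<Longrightarrow> dim_col B = dim_row C \<Longrightarrow> A * B * C = A * (B * C)"
  by (rule assoc_mult_mat[OF carrier_matI carrier_matI carrier_matI]) auto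

lemma transpose_mult_dims:
  fixes A B :: "'a :: comm_semiring_0 mat"
  shows "dim_col A = dim_row B \<Longrightarrow> transpose_mat (A * B) = transpose_mat B * transpose_mat A"
  by (rule transpose_mult[OF carrier_matI carrier_matI]) auto

lemma gram_isometry_conj:
  fixes B C S :: "'a :: comm_ring_1 mat"
  assumes B: "B \<in> carrier_mat n k" and C: "C \<in> carrier_mat m k'" and S: "S \<in> carrier_mat k k'"
    and isometry: "transpose_mat C * C = 1\<^sub>m k'"
  shows "(B * S * transpose_mat C) * transpose_mat (B * S * transpose_mat C)
       = B * (S * transpose_mat S) * transpose_mat B"
  using carrier_matD[OF B] carrier_matD[OF C] carrier_matD[OF S] isometry
  by (simp add: transpose_mult_dims assoc_mult_mat_dims flip: assoc_mult_mat_dims[of "transpose_mat C" C])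

lemma gram_smult:
  fixes X :: "'a :: comm_semiring_0 mat"
  shows "(c \<cdot>\<^sub>m X) * transpose_mat (c \<cdot>\<^sub>m X) = (c * c) \<cdot>\<^sub>m (X * transpose_mat X)"
  by (intro eq_matI) (auto simp: scalar_prod_def sum_distrib_left mult_ac intro!: sum.cong)

lemma gram_entry_commute:
  fixes X :: "'a :: comm_semiring_0 mat"
  assumes "i < dim_row X" "j < dim_row X"
  shows "(X * transpose_mat X) $$ (j, i) = (X * transpose_mat X) $$ (i, j)"
  using assms by (simp add: comm_scalar_prod[of _ "dim_col X"])

lemma conj_add_distrib:
  fixes B X Y :: "'a :: semiring_0 mat"
  assumes "B \<in> carrier_mat n k" "X \<in> carrier_mat k k" "Y \<in> carrier_mat k k"
  shows "B * (X + Y) * transpose_mat B = B * X * transpose_mat B + B * Y * transpose_mat B"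
  using assms by (simp add: mult_add_distrib_mat[of _ n k] add_mult_distrib_mat[of _ n k] del: assoc_mult_mat)

lemma mat_sum_carrier[simp]: "mat_sum d1 d2 A I \<in> carrier_mat d1 d2"
  by (simp add: mat_sum_def)

lemma mat_sum_empty[simp]: "mat_sum d1 d2 A {} = 0\<^sub>m d1 d2"
  by (auto simp: mat_sum_def)

lemma mat_sum_insert:
  assumes "finite I" "q \<notin> I" "A q \<in> carrier_mat d1 d2"
  shows "mat_sum d1 d2 A (insert q I) = A q + mat_sum d1 d2 A I"
  using assms by (intro eq_matI) (auto simp: mat_sum_def)

lemma mat_sum_cong: "(\<And>q. q \<in> I \<Longrightarrow> A q = A' q) \<Longrightarrow> mat_sum d1 d2 A I = mat_sum d1 d2 A' I"
  unfolding mat_sum_def by (metis (no_types, lifting) sum.cong)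

lemma mat_sum_conj:
  assumes "finite I" and B: "B \<in> carrier_mat n k" and A: "\<forall>q\<in>I. A q \<in> carrier_mat k k"
  shows "mat_sum n n (\<lambda>q. B * A q * transpose_mat B) I = B * mat_sum k k A I * transpose_mat B"
  using assms(1) A
proof (induction I rule: finite_induct)
  case (insert q I)
  hence Aq: "A q \<in> carrier_mat k k" by simp
  have "B * (A q + mat_sum k k A I) * transpose_mat B
      = B * A q * transpose_mat B + B * mat_sum k k A I * transpose_mat B"
    using B Aq by (rule conj_add_distrib) simp
  moreover have "B * A q * transpose_mat B \<in> carrier_mat n n"
    using B Aq by auto
  ultimately show ?case
    using insert B by (simp add: mat_sum_insert)
qed (use B in simp)

lemma smult_add_mat_sum_rescale:
  fixes P :: "real mat" and R :: "nat \<Rightarrow> real mat"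
  assumes "P \<in> carrier_mat k k" "\<And>q. dim_row (R q) = k" "\<And>q. dim_col (R q) = k" "D \<noteq> 0"
  shows "((T * T) * (T * T)) \<cdot>\<^sub>m P + mat_sum k k (\<lambda>q. ((T * D) * (T * D)) \<cdot>\<^sub>m R q) I
       = (T\<^sup>2 * D\<^sup>2) \<cdot>\<^sub>m ((T\<^sup>2 / D\<^sup>2) \<cdot>\<^sub>m P + mat_sum k k R I)"
  using assms by (intro eq_matI) (auto simp: mat_sum_def sum_distrib_left distrib_left power2_eq_square mult_ac)

lemma psd_mat_gram: "psd_mat (X * transpose_mat X)"
  unfolding psd_mat_def
proof
  fix v :: "real vec" assume "v \<in> carrier_vec (dim_col (X * transpose_mat X))"
  hence v: "v \<in> carrier_vec (dim_row X)" by simp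
  have X: "X \<in> carrier_mat (dim_row X) (dim_col X)" by simp
  have w: "transpose_mat X *\<^sub>v v \<in> carrier_vec (dim_col X)"
    using X v by (rule mult_mat_vec_carrier[OF iffD2[OF transpose_carrier_mat]])
  have "v \<bullet> (X * transpose_mat X *\<^sub>v v) = v \<bullet> (X *\<^sub>v (transpose_mat X *\<^sub>v v))"
    using assoc_mult_mat_vec[OF X _ v, of "transpose_mat X"] by simp
  also have "\<dots> = (transpose_mat X *\<^sub>v v) \<bullet> (transpose_mat X *\<^sub>v v)"
    using transpose_vec_mult_scalar[OF X w v] by simp
  also have "\<dots> \<ge> 0" using conjugate_square_ge_0_vec[of "transpose_mat X *\<^sub>v v"] by simp
  finally show "0 \<le> v \<bullet> (X * transpose_mat X *\<^sub>v v)" .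
qed
lemma psd_mat_add:
  assumes "A \<in> carrier_mat k k" "B \<in> carrier_mat k k" "psd_mat A" "psd_mat B"
  shows "psd_mat (A + B)"
  using assms by (auto simp: psd_mat_def add_mult_distrib_mat_vec scalar_prod_add_distrib[of _ k])
lemma psd_mat_smult:
  assumes "A \<in> carrier_mat k k" "0 \<le> c" "psd_mat A"
  shows "psd_mat (c \<cdot>\<^sub>m A)"
  unfolding psd_mat_def
proof
  fix v :: "real vec" assume v: "v \<in> carrier_vec (dim_col (c \<cdot>\<^sub>m A))"
  have "(c \<cdot>\<^sub>m A) *\<^sub>v v = c \<cdot>\<^sub>v (A *\<^sub>v v)"
    using v by (intro eq_vecI) (auto simp: scalar_prod_def sum_distrib_left mult.assoc intro!: sum.cong)
  thus "0 \<le> v \<bullet> ((c \<cdot>\<^sub>m A) *\<^sub>v v)"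
    using assms v by (simp add: psd_mat_def)
qed
lemma psd_mat_sum:
  assumes "finite I" "\<forall>q\<in>I. A q \<in> carrier_mat k k \<and> psd_mat (A q)"
  shows "psd_mat (mat_sum k k A I)"
  using assms
proof (induction I rule: finite_induct)
  case empty
  show ?case by (simp add: psd_mat_def scalar_prod_def)
next
  case (insert q I)
  hence "mat_sum k k A (insert q I) = A q + mat_sum k k A I"
    by (simp add: mat_sum_insert)
  thus ?case
    using insert by (auto intro: psd_mat_add[of _ k])
qed

section \<open>Community norms and the membership matrix\<close>

lemma vnorm_power2: "(vnorm n x)\<^sup>2 = (\<Sum>i<n. (x i)\<^sup>2)"
  unfolding vnorm_def by (simp add: sum_nonneg)

lemma vnorm_nonneg: "0 \<le> vnorm n x"
  unfolding vnorm_def by (simp add: sum_nonneg)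

lemma vnorm_pos:
  assumes "i < n" "x i \<noteq> 0"
  shows "0 < vnorm n x"
proof -
  have "0 < (x i)\<^sup>2" using assms(2) by simp
  also have "\<dots> \<le> (\<Sum>j<n. (x j)\<^sup>2)" by (rule member_le_sum) (use assms(1) in auto)
  finally show ?thesis unfolding vnorm_def by simp
qed

lemma vnorm_restr_power2: "(vnorm n (restr l \<theta> k))\<^sup>2 = (\<Sum>i\<in>{i\<in>{..<n}. l i = k}. (\<theta> i)\<^sup>2)"
proof -
  have "(\<Sum>i<n. (restr l \<theta> k i)\<^sup>2) = (\<Sum>i<n. if l i = k then (\<theta> i)\<^sup>2 else 0)"
    by (rule sum.cong) (auto simp: restr_def)
  also have "\<dots> = (\<Sum>i\<in>{i\<in>{..<n}. l i = k}. (\<theta> i)\<^sup>2)"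
    by (rule sum.inter_filter[symmetric]) simp
  finally show ?thesis unfolding vnorm_power2 .
qed

lemma sum_power2_by_label:
  assumes "\<forall>i<n. l i < K"
  shows "(\<Sum>i<n. (\<theta> i)\<^sup>2 * g (l i)) = (\<Sum>k<K. (vnorm n (restr l \<theta> k))\<^sup>2 * g k)"
proof -
  have "(\<Sum>k<K. (vnorm n (restr l \<theta> k))\<^sup>2 * g k)
      = (\<Sum>k<K. \<Sum>i\<in>{i\<in>{..<n}. l i = k}. (\<theta> i)\<^sup>2 * g (l i))"
    by (simp add: vnorm_restr_power2 sum_distrib_right)
  also have "\<dots> = (\<Sum>i<n. (\<theta> i)\<^sup>2 * g (l i))"
    by (rule sum.group) (use assms in auto)
  finally show ?thesis by simp
qed

lemma vnorm_restr_le: "vnorm n (restr l \<theta> k) \<le> vnorm n \<theta>"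
  unfolding vnorm_def by (intro real_sqrt_le_mono sum_mono) (simp add: restr_def)

lemma block_norm_pos:
  assumes "i < n" "l i = k" "0 < \<theta> i"
  shows "0 < vnorm n (restr l \<theta> k)"
  using assms by (intro vnorm_pos[of i]) (auto simp: restr_def)

lemma vnorm_le_sqrt_card_mult_block_norm:
  assumes l: "\<forall>i<n. l i < K" and C: "0 \<le> C"
    and ratio: "\<forall>k<K. vnorm n (restr l \<theta> k) \<le> C * vnorm n (restr l \<theta> k0)"
  shows "vnorm n \<theta> \<le> sqrt K * C * vnorm n (restr l \<theta> k0)"
proof -
  have "(vnorm n \<theta>)\<^sup>2 = (\<Sum>k<K. (vnorm n (restr l \<theta> k))\<^sup>2)"
    using sum_power2_by_label[OF l, of \<theta> "\<lambda>_. 1"] unfolding vnorm_power2[of n \<theta>] by simp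
  also have "\<dots> \<le> (\<Sum>k<K. (C * vnorm n (restr l \<theta> k0))\<^sup>2)"
  proof (rule sum_mono)
    fix k assume "k \<in> {..<K}"
    thus "(vnorm n (restr l \<theta> k))\<^sup>2 \<le> (C * vnorm n (restr l \<theta> k0))\<^sup>2"
      using ratio by (intro power_mono) (simp_all add: vnorm_nonneg)
  qed
  also have "\<dots> = (sqrt K * C * vnorm n (restr l \<theta> k0))\<^sup>2"
    by (simp add: power_mult_distrib)
  finally show ?thesis
    by (rule power2_le_imp_le) (use C in \<open>simp add: vnorm_nonneg\<close>)
qed

definition membership_mat ::
    "nat \<Rightarrow> nat \<Rightarrow> (nat \<Rightarrow> nat) \<Rightarrow> (nat \<Rightarrow> real) \<Rightarrow> real mat" where
  "membership_mat K n l \<theta> = mat n K (\<lambda>(i, k). if l i = k then \<theta> i / vnorm n (restr l \<theta> k) else 0)"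

lemma membership_mat_dims [simp]:
  "dim_row (membership_mat K n l \<theta>) = n" "dim_col (membership_mat K n l \<theta>) = K"
  by (simp_all add: membership_mat_def)

lemma membership_mat_carrier: "membership_mat K n l \<theta> \<in> carrier_mat n K"
  by (rule carrier_matI) simp_all

lemma membership_mat_isometry:
  assumes l: "\<forall>i<n. l i < K" and pos: "\<forall>k<K. 0 < vnorm n (restr l \<theta> k)"
  shows "transpose_mat (membership_mat K n l \<theta>) * membership_mat K n l \<theta> = 1\<^sub>m K"
proof (rule eq_matI)
  fix a b assume "a < dim_row (1\<^sub>m K :: real mat)" "b < dim_col (1\<^sub>m K :: real mat)"
  hence a: "a < K" and b: "b < K" by auto
  let ?\<nu> = "\<lambda>k. vnorm n (restr l \<theta> k)"
  define g where "g k = (if k = a \<and> k = b then 1 / (?\<nu> a * ?\<nu> b) else 0)" for k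
  have "(transpose_mat (membership_mat K n l \<theta>) * membership_mat K n l \<theta>) $$ (a, b)
      = (\<Sum>i<n. (\<theta> i)\<^sup>2 * g (l i))"
    using a b unfolding membership_mat_def g_def
    by (auto simp: scalar_prod_def atLeast0LessThan power2_eq_square intro!: sum.cong)
  also have "\<dots> = (\<Sum>k<K. (?\<nu> k)\<^sup>2 * g k)"
    by (rule sum_power2_by_label[OF l])
  also have "\<dots> = (1\<^sub>m K :: real mat) $$ (a, b)"
    unfolding g_def using a b pos by (auto simp: power2_eq_square if_distrib[of "\<lambda>x. _ * x"] cong: if_cong)
  finally show "(transpose_mat (membership_mat K n l \<theta>) * membership_mat K n l \<theta>) $$ (a, b)
      = (1\<^sub>m K :: real mat) $$ (a, b)" .
qed auto

lemma membership_mat_mult_entry: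
  assumes "X \<in> carrier_mat K k" "\<forall>i<n. l i < K" "i < n" "b < k"
  shows "(membership_mat K n l \<theta> * X) $$ (i, b) = \<theta> i / vnorm n (restr l \<theta> (l i)) * X $$ (l i, b)"
  using assms unfolding membership_mat_def
  by (simp add: scalar_prod_def if_distrib[of "\<lambda>x. x * _"] sum.delta' cong: if_cong)

lemma membership_mat_conj_entry:
  assumes X: "X \<in> carrier_mat K K'" and l: "\<forall>i<n. l i < K" and r: "\<forall>j<m. r j < K'"
    and i: "i < n" and j: "j < m"
  shows "(membership_mat K n l \<theta> * X * transpose_mat (membership_mat K' m r \<delta>)) $$ (i, j)
       = \<theta> i / vnorm n (restr l \<theta> (l i)) * X $$ (l i, r j) * (\<delta> j / vnorm m (restr r \<delta> (r j)))"
proof -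
  have "(membership_mat K n l \<theta> * X * transpose_mat (membership_mat K' m r \<delta>)) $$ (i, j)
      = (\<Sum>b\<in>{0..<K'}. (membership_mat K n l \<theta> * X) $$ (i, b)
           * (if r j = b then \<delta> j / vnorm m (restr r \<delta> b) else 0))"
    using X i j by (auto simp: scalar_prod_def membership_mat_def intro!: sum.cong)
  also have "\<dots> = (membership_mat K n l \<theta> * X) $$ (i, r j) * (\<delta> j / vnorm m (restr r \<delta> (r j)))"
    using r j by (simp add: if_distrib[of "\<lambda>x. _ * x"] sum.delta cong: if_cong)
  finally show ?thesis
    using membership_mat_mult_entry[OF X l i] r j by simp
qed

lemma Umat_eq_membership_mat_mult:
  assumes "J \<in> carrier_mat K K" "\<forall>i<n. l i < K"
  shows "Umat K n l \<theta> J = membership_mat K n l \<theta> * J"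
  using assms by (intro eq_matI) (auto simp: Umat_def membership_mat_mult_entry simp del: index_mult_mat(1))

section \<open>Factorisation of the population matrices\<close>

lemma Psi_conj_entry:
  assumes "X \<in> carrier_mat K K'" "a < K" "b < K'"
  shows "(Psi K n l \<theta> * X * Psi K' m r \<delta>) $$ (a, b)
       = vnorm n (restr l \<theta> a) / vnorm n \<theta> * X $$ (a, b) * (vnorm m (restr r \<delta> b) / vnorm m \<delta>)"
proof -
  have "Psi k d lab x = mat_diag k (\<lambda>a. vnorm d (restr lab x a) / vnorm d x)" for k d lab x
    unfolding Psi_def mat_diag_def by (intro cong_mat) auto
  thus ?thesis
    using assms by (simp add: mat_diag_mult_left mat_diag_mult_right[of _ K])
qed

lemma OmegaQ_factor:
  assumes X: "X \<in> carrier_mat K K'" and l: "\<forall>i<n. l i < K" and r: "\<forall>j<m. r j < K'"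
    and \<nu>: "\<forall>k<K. 0 < vnorm n (restr l \<theta> k)" and \<mu>: "\<forall>k<K'. 0 < vnorm m (restr r \<delta> k)"
    and T: "0 < vnorm n \<theta>" and D: "0 < vnorm m \<delta>"
  shows "OmegaQ n m l r \<theta> \<delta> X = membership_mat K n l \<theta>
           * ((vnorm n \<theta> * vnorm m \<delta>) \<cdot>\<^sub>m (Psi K n l \<theta> * X * Psi K' m r \<delta>))
           * transpose_mat (membership_mat K' m r \<delta>)" (is "_ = ?B * (?c \<cdot>\<^sub>m ?P) * ?C\<^sup>T")
proof (rule eq_matI)
  fix i j assume "i < dim_row (?B * (?c \<cdot>\<^sub>m ?P) * ?C\<^sup>T)" "j < dim_col (?B * (?c \<cdot>\<^sub>m ?P) * ?C\<^sup>T)"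
  hence i: "i < n" and j: "j < m" by auto
  hence li: "l i < K" and rj: "r j < K'" using l r by auto
  have P: "?P \<in> carrier_mat K K'"
    using X by (auto simp: Psi_def)
  have "(?c \<cdot>\<^sub>m ?P) $$ (l i, r j)
      = vnorm n (restr l \<theta> (l i)) * X $$ (l i, r j) * vnorm m (restr r \<delta> (r j))"
    using carrier_matD[OF P] li rj T D by (simp add: Psi_conj_entry[OF X li rj])
  moreover have "0 < vnorm n (restr l \<theta> (l i))" "0 < vnorm m (restr r \<delta> (r j))"
    using \<nu> \<mu> li rj by auto
  ultimately show "OmegaQ n m l r \<theta> \<delta> X $$ (i, j) = (?B * (?c \<cdot>\<^sub>m ?P) * ?C\<^sup>T) $$ (i, j)"
    using membership_mat_conj_entry[OF smult_carrier_mat[OF P] l r i j] i j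
    by (simp add: OmegaQ_def)
qed (auto simp: OmegaQ_def)

lemma Sbar_dims [simp]:
  "dim_row (Sbar K K' Q n m l r \<theta> \<delta> E F) = K" "dim_col (Sbar K K' Q n m l r \<theta> \<delta> E F) = K"
  by (simp_all add: Sbar_def Let_def mat_sum_def Psi_def)

lemma Sbar_carrier: "Sbar K K' Q n m l r \<theta> \<delta> E F \<in> carrier_mat K K"
  by (rule carrier_matI) simp_all

lemma Sbar_sym: "transpose_mat (Sbar K K' Q n m l r \<theta> \<delta> E F) = Sbar K K' Q n m l r \<theta> \<delta> E F"
proof (rule eq_matI)
  define S0 where "S0 = Psi K n l \<theta> * E * Psi K n l \<theta>"
  define S where "S q = Psi K n l \<theta> * F q * Psi K' m r \<delta>" for q
  have dims: "dim_row S0 = K" "dim_row (S q) = K" for q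
    by (simp_all add: S0_def S_def Psi_def)
  fix i j assume "i < dim_row (Sbar K K' Q n m l r \<theta> \<delta> E F)" "j < dim_col (Sbar K K' Q n m l r \<theta> \<delta> E F)"
  hence "i < K" "j < K" by simp_all
  thus "transpose_mat (Sbar K K' Q n m l r \<theta> \<delta> E F) $$ (i, j) = Sbar K K' Q n m l r \<theta> \<delta> E F $$ (i, j)"
    using dims by (simp add: Sbar_def Let_def mat_sum_def gram_entry_commute
        flip: S0_def S_def del: index_mult_mat(1))
qed simp_all

lemma Sbar_psd: "psd_mat (Sbar K K' Q n m l r \<theta> \<delta> E F)"
proof -
  define S0 where "S0 = Psi K n l \<theta> * E * Psi K n l \<theta>"
  define S where "S q = Psi K n l \<theta> * F q * Psi K' m r \<delta>" for q
  have "S0 * transpose_mat S0 \<in> carrier_mat K K" "S q * transpose_mat (S q) \<in> carrier_mat K K" for q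
    by (auto simp: S0_def S_def Psi_def intro!: carrier_matI)
  hence "psd_mat (((vnorm n \<theta>)\<^sup>2 / (vnorm m \<delta>)\<^sup>2) \<cdot>\<^sub>m (S0 * transpose_mat S0)
      + mat_sum K K (\<lambda>q. S q * transpose_mat (S q)) {1..Q})"
    by (intro psd_mat_add[of _ K] psd_mat_smult[of _ K] psd_mat_sum psd_mat_gram) (auto simp: psd_mat_gram)
  thus ?thesis by (simp add: Sbar_def Let_def S0_def S_def)
qed

section \<open>The spectrum of the population matrix\<close>

locale dcsbm =
  fixes K K' Q n m :: nat and l r :: "nat \<Rightarrow> nat" and \<theta> \<delta> :: "nat \<Rightarrow> real"
    and E :: "real mat" and F :: "nat \<Rightarrow> real mat"
  assumes model: "model_ok K K' Q n m l r \<theta> \<delta> E F" and K_pos: "1 \<le> K" and K'_pos: "1 \<le> K'"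
begin

lemma labels: "\<forall>i<n. l i < K" "\<forall>j<m. r j < K'"
  using model by (simp_all add: model_ok_def)

lemma E_carrier: "E \<in> carrier_mat K K"
  using model by (simp add: model_ok_def)

lemma F_carrier: "q \<in> {1..Q} \<Longrightarrow> F q \<in> carrier_mat K K'"
  using model by (simp add: model_ok_def)

lemma block_norms_pos: "\<forall>k<K. 0 < vnorm n (restr l \<theta> k)" "\<forall>k<K'. 0 < vnorm m (restr r \<delta> k)"
  using model unfolding model_ok_def by (metis block_norm_pos)+

lemma norms_pos: "0 < vnorm n \<theta>" "0 < vnorm m \<delta>"
  using block_norms_pos K_pos K'_pos vnorm_restr_le
  by (metis less_le_trans less_one linorder_not_less)+

lemma K_le_n: "K \<le> n"
proof -
  have "{..<K} \<subseteq> l ` {..<n}" using model unfolding model_ok_def by auto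
  hence "card {..<K} \<le> card (l ` {..<n})" by (intro card_mono) auto
  also have "\<dots> \<le> card {..<n}" by (rule card_image_le) simp
  finally show ?thesis by simp
qed

abbreviation B :: "real mat" where "B \<equiv> membership_mat K n l \<theta>"
abbreviation B' :: "real mat" where "B' \<equiv> membership_mat K' m r \<delta>"
abbreviation S0 :: "real mat" where "S0 \<equiv> Psi K n l \<theta> * E * Psi K n l \<theta>"
abbreviation S :: "nat \<Rightarrow> real mat" where "S q \<equiv> Psi K n l \<theta> * F q * Psi K' m r \<delta>"
abbreviation Sb :: "real mat" where "Sb \<equiv> Sbar K K' Q n m l r \<theta> \<delta> E F"
abbreviation \<Omega> :: "real mat" where "\<Omega> \<equiv> Omega_M Q n m l r \<theta> \<delta> E F"
abbreviation U :: "real mat \<Rightarrow> real mat" where "U J \<equiv> Umat K n l \<theta> J"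
abbreviation scale :: real where "scale \<equiv> (vnorm n \<theta>)\<^sup>2 * (vnorm m \<delta>)\<^sup>2"

lemma B_isometry: "transpose_mat B * B = 1\<^sub>m K"
  by (rule membership_mat_isometry[OF labels(1) block_norms_pos(1)])

lemma B'_isometry: "transpose_mat B' * B' = 1\<^sub>m K'"
  by (rule membership_mat_isometry[OF labels(2) block_norms_pos(2)])

lemma S0_carrier: "S0 \<in> carrier_mat K K"
  using E_carrier by (auto simp: Psi_def)

lemma S_carrier: "q \<in> {1..Q} \<Longrightarrow> S q \<in> carrier_mat K K'"
  using F_carrier by (auto simp: Psi_def)

lemma Omega0_gram:
  "Omega0 n l \<theta> E * transpose_mat (Omega0 n l \<theta> E)
     = B * (((vnorm n \<theta> * vnorm n \<theta>) * (vnorm n \<theta> * vnorm n \<theta>)) \<cdot>\<^sub>m (S0 * transpose_mat S0))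
         * transpose_mat B"
proof -
  have "Omega0 n l \<theta> E = OmegaQ n n l l \<theta> \<theta> E"
    by (simp add: Omega0_def OmegaQ_def)
  also have "\<dots> = B * ((vnorm n \<theta> * vnorm n \<theta>) \<cdot>\<^sub>m S0) * transpose_mat B"
    by (rule OmegaQ_factor[OF E_carrier labels(1) labels(1) block_norms_pos(1) block_norms_pos(1)
          norms_pos(1) norms_pos(1)])
  finally show ?thesis
    using S0_carrier by (simp add: gram_isometry_conj[OF membership_mat_carrier membership_mat_carrier _ B_isometry]
        gram_smult)
qed

lemma OmegaQ_gram:
  assumes "q \<in> {1..Q}"
  shows "OmegaQ n m l r \<theta> \<delta> (F q) * transpose_mat (OmegaQ n m l r \<theta> \<delta> (F q))
     = B * (((vnorm n \<theta> * vnorm m \<delta>) * (vnorm n \<theta> * vnorm m \<delta>)) \<cdot>\<^sub>m (S q * transpose_mat (S q)))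
         * transpose_mat B"
proof -
  have "OmegaQ n m l r \<theta> \<delta> (F q) = B * ((vnorm n \<theta> * vnorm m \<delta>) \<cdot>\<^sub>m S q) * transpose_mat B'"
    by (rule OmegaQ_factor[OF F_carrier[OF assms] labels block_norms_pos norms_pos])
  thus ?thesis
    using S_carrier[OF assms]
    by (simp add: gram_isometry_conj[OF membership_mat_carrier membership_mat_carrier _ B'_isometry] gram_smult)
qed

lemma Omega_M_factor: "\<Omega> = B * (scale \<cdot>\<^sub>m Sb) * transpose_mat B"
proof -
  let ?T = "vnorm n \<theta>" and ?D = "vnorm m \<delta>"
  define X where "X = ((?T * ?T) * (?T * ?T)) \<cdot>\<^sub>m (S0 * transpose_mat S0)"
  define Y where "Y = mat_sum K K (\<lambda>q. ((?T * ?D) * (?T * ?D)) \<cdot>\<^sub>m (S q * transpose_mat (S q))) {1..Q}"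
  have gram0_carrier: "S0 * transpose_mat S0 \<in> carrier_mat K K"
    using S0_carrier by (intro mult_carrier_mat[of _ K K "transpose_mat S0" K]) simp_all
  hence X_carrier: "X \<in> carrier_mat K K"
    unfolding X_def by simp
  have carrier: "((?T * ?D) * (?T * ?D)) \<cdot>\<^sub>m (S q * transpose_mat (S q)) \<in> carrier_mat K K"
    if "q \<in> {1..Q}" for q
    using S_carrier[OF that]
    by (intro smult_carrier_mat mult_carrier_mat[of _ K K' "transpose_mat (S q)" K]) simp_all
  have "mat_sum n n (\<lambda>q. OmegaQ n m l r \<theta> \<delta> (F q) * transpose_mat (OmegaQ n m l r \<theta> \<delta> (F q))) {1..Q}
      = mat_sum n n (\<lambda>q. B * (((?T * ?D) * (?T * ?D)) \<cdot>\<^sub>m (S q * transpose_mat (S q))) * transpose_mat B)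
          {1..Q}"
    by (rule mat_sum_cong) (rule OmegaQ_gram)
  also have "\<dots> = B * Y * transpose_mat B"
    unfolding Y_def using carrier by (intro mat_sum_conj[OF _ membership_mat_carrier]) auto
  finally have "\<Omega> = B * X * transpose_mat B + B * Y * transpose_mat B"
    by (simp add: Omega_M_def Omega0_gram X_def)
  also have "\<dots> = B * (X + Y) * transpose_mat B"
    by (rule conj_add_distrib[symmetric, OF membership_mat_carrier X_carrier]) (simp add: Y_def)
  also have "X + Y = scale \<cdot>\<^sub>m Sb"
    unfolding X_def Y_def Sbar_def Let_def using gram0_carrier norms_pos
    by (intro smult_add_mat_sum_rescale) (simp_all add: Psi_def)
  finally show ?thesis .
qed

lemma eigs_desc_Omega_M:
  "eigs_desc \<Omega> = map ((*) scale) (eigs_desc Sb) @ replicate (n - K) 0"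
  unfolding Omega_M_factor
  using norms_pos K_le_n
  by (intro eigs_desc_isometry_conj[OF membership_mat_carrier B_isometry Sbar_carrier Sbar_sym Sbar_psd]) auto

lemma eig_Omega_M_leading:
  assumes "1 \<le> i" "i \<le> K"
  shows "eig i \<Omega> = scale * eig i Sb"
proof -
  have "i - 1 < length (eigs_desc Sb)"
    using assms length_eigs_desc_real_sym[OF Sbar_carrier Sbar_sym] by simp
  thus ?thesis by (simp add: eig_def eigs_desc_Omega_M nth_append)
qed

lemma eig_Omega_M_trailing:
  assumes "K < i" "i \<le> n"
  shows "eig i \<Omega> = 0"
  using assms length_eigs_desc_real_sym[OF Sbar_carrier Sbar_sym]
  by (simp add: eig_def eigs_desc_Omega_M nth_append)

lemma Omega_M_eig_decomp:
  assumes "eig_decomp K Sb J \<Sigma>"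
  shows "U J \<in> carrier_mat n K"
    and "transpose_mat (U J) * U J = 1\<^sub>m K"
    and "\<Omega> = U J * (scale \<cdot>\<^sub>m \<Sigma>) * transpose_mat (U J)"
proof -
  from assms have J: "J \<in> carrier_mat K K" and J_orth: "transpose_mat J * J = 1\<^sub>m K"
    and \<Sigma>: "\<Sigma> \<in> carrier_mat K K" and decomp: "Sb = J * \<Sigma> * transpose_mat J"
    unfolding eig_decomp_def by auto
  have U: "U J = B * J"
    by (rule Umat_eq_membership_mat_mult[OF J labels(1)])
  show "U J \<in> carrier_mat n K"
    unfolding U using J by (simp add: mult_carrier_mat[OF membership_mat_carrier])
  show "transpose_mat (U J) * U J = 1\<^sub>m K"
    unfolding U using J J_orth B_isometry
    by (simp add: transpose_mult_dims assoc_mult_mat_dims flip: assoc_mult_mat_dims[of "transpose_mat B" B])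
  have "scale \<cdot>\<^sub>m Sb = J * (scale \<cdot>\<^sub>m \<Sigma>) * transpose_mat J"
    unfolding decomp using J \<Sigma> mult_carrier_mat[OF J \<Sigma>]
    by (simp add: mult_smult_assoc_mat[of _ K K] mult_smult_distrib[of _ K K])
  thus "\<Omega> = U J * (scale \<cdot>\<^sub>m \<Sigma>) * transpose_mat (U J)"
    unfolding Omega_M_factor U using J \<Sigma> carrier_matD[OF J] carrier_matD[OF \<Sigma>]
    by (simp add: transpose_mult_dims assoc_mult_mat_dims)
qed

lemma Umat_row_norm:
  assumes "eig_decomp K Sb J \<Sigma>" and i: "i < n"
  shows "vnorm K (\<lambda>a. U J $$ (i, a)) = \<theta> i / vnorm n (restr l \<theta> (l i))"
proof -
  from assms have J: "J \<in> carrier_mat K K" and J_orth: "J * transpose_mat J = 1\<^sub>m K"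
    unfolding eig_decomp_def by auto
  have li: "l i < K" using labels(1) i by simp
  have "(\<Sum>a<K. (J $$ (l i, a))\<^sup>2) = (J * transpose_mat J) $$ (l i, l i)"
    using J li by (simp add: scalar_prod_def atLeast0LessThan power2_eq_square)
  hence "(\<Sum>a<K. (J $$ (l i, a))\<^sup>2) = 1" using J_orth li by simp
  moreover have "(\<Sum>a<K. (U J $$ (i, a))\<^sup>2)
      = (\<theta> i / vnorm n (restr l \<theta> (l i)))\<^sup>2 * (\<Sum>a<K. (J $$ (l i, a))\<^sup>2)"
    using i by (simp add: Umat_def sum_distrib_left power_mult_distrib power_divide)
  moreover have "0 \<le> \<theta> i"
    using model i unfolding model_ok_def by (simp add: less_imp_le)
  ultimately show ?thesis
    unfolding vnorm_def[of K] using vnorm_nonneg[of n "restr l \<theta> (l i)"] by simp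
qed

lemma Umat_row_norm_bounds:
  assumes decomp: "eig_decomp K Sb J \<Sigma>" and i: "i < n" and C: "0 \<le> C"
    and ratio: "\<forall>k<K. \<forall>k'<K. vnorm n (restr l \<theta> k) \<le> C * vnorm n (restr l \<theta> k')"
  shows "\<theta> i / vnorm n \<theta> \<le> vnorm K (\<lambda>a. U J $$ (i, a))"
    and "vnorm K (\<lambda>a. U J $$ (i, a)) \<le> sqrt K * C * (\<theta> i / vnorm n \<theta>)"
proof -
  have li: "l i < K" and \<theta>: "0 < \<theta> i"
    using i labels model unfolding model_ok_def by auto
  have \<nu>: "0 < vnorm n (restr l \<theta> (l i))"
    using block_norms_pos(1) li by simp
  show "\<theta> i / vnorm n \<theta> \<le> vnorm K (\<lambda>a. U J $$ (i, a))"
    unfolding Umat_row_norm[OF decomp i]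
    using \<theta> \<nu> norms_pos(1) vnorm_restr_le[of n l \<theta> "l i"] by (intro divide_left_mono) simp_all
  have "vnorm n \<theta> \<le> sqrt K * C * vnorm n (restr l \<theta> (l i))"
    using ratio li by (intro vnorm_le_sqrt_card_mult_block_norm[OF labels(1) C]) auto
  hence "vnorm n \<theta> / vnorm n (restr l \<theta> (l i)) \<le> sqrt K * C"
    using \<nu> by (simp add: pos_divide_le_eq)
  hence "(\<theta> i / vnorm n \<theta>) * (vnorm n \<theta> / vnorm n (restr l \<theta> (l i)))
      \<le> (\<theta> i / vnorm n \<theta>) * (sqrt K * C)"
    using \<theta> norms_pos(1) by (intro mult_left_mono) simp_all
  thus "vnorm K (\<lambda>a. U J $$ (i, a)) \<le> sqrt K * C * (\<theta> i / vnorm n \<theta>)"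
    unfolding Umat_row_norm[OF decomp i] using norms_pos(1) by (simp add: mult.commute)
qed

end

lemma Umat_row_norm_asymp:
  fixes K K' Q :: nat and mf :: "nat \<Rightarrow> nat" and lf rf :: "nat \<Rightarrow> nat \<Rightarrow> nat"
    and \<theta>f \<delta>f :: "nat \<Rightarrow> nat \<Rightarrow> real" and Ef Jf \<Sigma>f :: "nat \<Rightarrow> real mat"
    and Ff :: "nat \<Rightarrow> nat \<Rightarrow> real mat"
  assumes "1 \<le> K" "1 \<le> K'"
    and models: "\<forall>\<^sub>F n in sequentially.
         model_ok K K' Q n (mf n) (lf n) (rf n) (\<theta>f n) (\<delta>f n) (Ef n) (Ff n) \<and>
         eig_decomp K (Sbar K K' Q n (mf n) (lf n) (rf n) (\<theta>f n) (\<delta>f n) (Ef n) (Ff n)) (Jf n) (\<Sigma>f n)"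
    and "\<exists>C>0. \<forall>\<^sub>F n in sequentially. \<forall>k<K. \<forall>k'<K.
          vnorm n (restr (lf n) (\<theta>f n) k) \<le> C * vnorm n (restr (lf n) (\<theta>f n) k')"
  shows "\<exists>C>0. \<forall>\<^sub>F n in sequentially. \<forall>i<n.
          vnorm K (\<lambda>a. Umat K n (lf n) (\<theta>f n) (Jf n) $$ (i,a)) \<le> C * (\<theta>f n i / vnorm n (\<theta>f n)) \<and>
          \<theta>f n i / vnorm n (\<theta>f n) \<le> C * vnorm K (\<lambda>a. Umat K n (lf n) (\<theta>f n) (Jf n) $$ (i,a))"
proof -
  obtain C where C: "0 < C" and ratio: "\<forall>\<^sub>F n in sequentially. \<forall>k<K. \<forall>k'<K.
      vnorm n (restr (lf n) (\<theta>f n) k) \<le> C * vnorm n (restr (lf n) (\<theta>f n) k')"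
    using assms(4) by blast
  have "\<forall>\<^sub>F n in sequentially. \<forall>i<n.
          vnorm K (\<lambda>a. Umat K n (lf n) (\<theta>f n) (Jf n) $$ (i,a)) \<le> (sqrt K * C + 1) * (\<theta>f n i / vnorm n (\<theta>f n)) \<and>
          \<theta>f n i / vnorm n (\<theta>f n) \<le> (sqrt K * C + 1) * vnorm K (\<lambda>a. Umat K n (lf n) (\<theta>f n) (Jf n) $$ (i,a))"
    using eventually_conj[OF models ratio]
  proof eventually_elim
    case (elim n)
    then interpret dcsbm K K' Q n "mf n" "lf n" "rf n" "\<theta>f n" "\<delta>f n" "Ef n" "Ff n"
      using assms(1,2) by unfold_locales simp_all
    show ?case
    proof (intro allI impI conjI)
      fix i assume i: "i < n"
      let ?u = "vnorm K (\<lambda>a. Umat K n (lf n) (\<theta>f n) (Jf n) $$ (i,a))"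
      let ?w = "\<theta>f n i / vnorm n (\<theta>f n)"
      have bounds: "?w \<le> ?u" "?u \<le> sqrt K * C * ?w"
        using Umat_row_norm_bounds[of "Jf n" "\<Sigma>f n" i C] elim i C by simp_all
      have "0 \<le> ?w"
        using model i norms_pos(1) unfolding model_ok_def by (simp add: less_imp_le)
      thus "?u \<le> (sqrt K * C + 1) * ?w"
        by (intro order_trans[OF bounds(2)] mult_right_mono) simp_all
      show "?w \<le> (sqrt K * C + 1) * ?u"
        using bounds(1) C vnorm_nonneg[of K] by (simp add: distrib_right add_increasing)
    qed
  qed
  moreover have "0 < sqrt K * C + 1"
    using C by (simp add: add_nonneg_pos)
  ultimately show ?thesis by blast
qed

theorem proposition1:
  fixes K K' Q :: nat
  assumes "2 \<le> K" and "1 \<le> K'" and "1 \<le> Q"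
  shows
   "(\<forall>n m l r \<theta> \<delta> E F. model_ok K K' Q n m l r \<theta> \<delta> E F \<longrightarrow>
      (\<forall>i. 1 \<le> i \<and> i \<le> K \<longrightarrow>
         eig i (Omega_M Q n m l r \<theta> \<delta> E F)
           = (vnorm n \<theta>)\<^sup>2 * (vnorm m \<delta>)\<^sup>2 * eig i (Sbar K K' Q n m l r \<theta> \<delta> E F)) \<and>
      (\<forall>i. K < i \<and> i \<le> n \<longrightarrow> eig i (Omega_M Q n m l r \<theta> \<delta> E F) = 0) \<and>
      (\<forall>J \<Sigma>. eig_decomp K (Sbar K K' Q n m l r \<theta> \<delta> E F) J \<Sigma> \<longrightarrow>
         Umat K n l \<theta> J \<in> carrier_mat n K \<and>
         transpose_mat (Umat K n l \<theta> J) * Umat K n l \<theta> J = 1\<^sub>m K \<and>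
         Omega_M Q n m l r \<theta> \<delta> E F =
           Umat K n l \<theta> J * (((vnorm n \<theta>)\<^sup>2 * (vnorm m \<delta>)\<^sup>2) \<cdot>\<^sub>m \<Sigma>)
             * transpose_mat (Umat K n l \<theta> J)))
    \<and>
    (\<forall>(mf :: nat \<Rightarrow> nat) (lf :: nat \<Rightarrow> nat \<Rightarrow> nat) (rf :: nat \<Rightarrow> nat \<Rightarrow> nat)
       (\<theta>f :: nat \<Rightarrow> nat \<Rightarrow> real) (\<delta>f :: nat \<Rightarrow> nat \<Rightarrow> real)
       (Ef :: nat \<Rightarrow> real mat) (Ff :: nat \<Rightarrow> nat \<Rightarrow> real mat)
       (Jf :: nat \<Rightarrow> real mat) (\<Sigma>f :: nat \<Rightarrow> real mat).
      (\<forall>\<^sub>F n in sequentially.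
         model_ok K K' Q n (mf n) (lf n) (rf n) (\<theta>f n) (\<delta>f n) (Ef n) (Ff n) \<and>
         eig_decomp K (Sbar K K' Q n (mf n) (lf n) (rf n) (\<theta>f n) (\<delta>f n) (Ef n) (Ff n))
           (Jf n) (\<Sigma>f n)) \<longrightarrow>
      (\<exists>C>0. \<forall>\<^sub>F n in sequentially. \<forall>k<K. \<forall>k'<K.
          vnorm n (restr (lf n) (\<theta>f n) k) \<le> C * vnorm n (restr (lf n) (\<theta>f n) k')) \<longrightarrow>
      (\<exists>C>0. \<forall>\<^sub>F n in sequentially. \<forall>i<n.
          vnorm K (\<lambda>a. Umat K n (lf n) (\<theta>f n) (Jf n) $$ (i,a)) \<le> C * (\<theta>f n i / vnorm n (\<theta>f n)) \<and>
          \<theta>f n i / vnorm n (\<theta>f n) \<le> C * vnorm K (\<lambda>a. Umat K n (lf n) (\<theta>f n) (Jf n) $$ (i,a))))"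
proof -
  have model: "dcsbm K K' Q n m l r \<theta> \<delta> E F" if "model_ok K K' Q n m l r \<theta> \<delta> E F"
    for n m l r \<theta> \<delta> E F
    using that assms(1,2) by unfold_locales simp_all
  show ?thesis
    using dcsbm.eig_Omega_M_leading[OF model] dcsbm.eig_Omega_M_trailing[OF model]
      dcsbm.Omega_M_eig_decomp[OF model] Umat_row_norm_asymp[OF _ assms(2)] assms(1)
    by auto
qed

end
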